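(* In the setting described in the context, assume $\Delta_1>0$. Let $\beta_t$ ($t\ge1$) be the policy computed by LPSM at slot $t$, and let $Z=\inf\{z\ge 1:\ \beta_t=\beta^*\text{ for all }t\ge z\}$ (with $\inf\emptyset=\infty$) be the first slot from which on LPSM never fails to find the optimal policy. Then $\mathbb{E}[Z]<\infty$.
   Context: Setting (MDP with unknown mean rewards). $\mathcal{S}$ is a finite state space and $\mathcal{A}$ a finite action set, with $S=|\mathcal{S}|$, $A=|\mathcal{A}|$; for each $s\in\mathcal{S}$ a nonempty set $\mathcal{A}_s\subseteq\mathcal{A}$ of allowed actions is given. The transition probabilities $P(s'\mid s,a)$ are known to the agent. The MDP is ergodic: every deterministic stationary policy $\beta:\mathcal{S}\to\mathcal{A}$ with $\beta(s)\in\mathcal{A}_s$ induces an irreducible aperiodic Markov chain; let $\pi_\beta$ be its stationary distribution. Let $X_0,X_1,\dots$ be i.i.d. random variables with support $\mathcal{X}$. If at slot $t$ the state is $s_t$ and action $a_t\in\mathcal{A}_{s_t}$ is taken, the agent receives reward $r_t=f(s_t,a_t,X_t)$ with $f$ known to the agent, the next state is drawn from $P(\cdot\mid s_t,a_t)$, and after slot $t$ the agent learns the realization $x_t$ of $X_t$. Let $\mu(s,a)=\mathbb{E}[f(s,a,X)]$, $\mathbf{M}$ the matrix of the $\mu(s,a)$, and $\rho(\beta,\Theta)=\sum_s\pi_\beta(s)\Theta(s,\beta(s))$ for a matrix $\Theta$. Let $\beta^*$ be an optimal deterministic stationary policy, $\rho^*=\rho(\beta^*,\mathbf{M})=\max_\beta\rho(\beta,\mathbf{M})$,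 $\Delta_1=\rho^*-\max_{\beta\ne\beta^*}\rho(\beta,\mathbf{M})$. Assume $\sup_{x\in\mathcal{X}}f(s,a,x)-\inf_{x\in\mathcal{X}}f(s,a,x)$ is finite for all $(s,a)$. LP$(\Theta)$: maximize $\sum_{s}\sum_{a\in\mathcal{A}_s}\pi(s,a)\Theta(s,a)$ subject to $\pi(s,a)\ge 0$, $\sum_s\sum_{a\in\mathcal{A}_s}\pi(s,a)=1$, and $\sum_{a\in\mathcal{A}_{s'}}\pi(s',a)=\sum_s\sum_{a\in\mathcal{A}_s}\pi(s,a)P(s'\mid s,a)$ for all $s'$. Algorithm LPSM: at slot $0$ play any allowed action. At each slot $n\ge1$, let $\Theta_n(s,a)=\frac1n\sum_{k=0}^{n-1}f(s,a,x_k)$, solve LP$(\Theta_n)$ to obtain $\pi_{(n)}$, define $\beta_n(s)\in\arg\max_{a\in\mathcal{A}_s}\pi_{(n)}(s,a)$, and play $\beta_n(s_n)$. *)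

theory Defs
  imports "HOL-Probability.Probability"
begin

definition admissible :: "('s \<Rightarrow> 'a set) \<Rightarrow> ('s \<Rightarrow> 'a) \<Rightarrow> bool" where
  "admissible Acts \<beta> \<longleftrightarrow> (\<forall>s. \<beta> s \<in> Acts s)"

definition pol_mat :: "('s \<Rightarrow> 'a \<Rightarrow> 's \<Rightarrow> real) \<Rightarrow> ('s \<Rightarrow> 'a) \<Rightarrow> 's \<Rightarrow> 's \<Rightarrow> real" where
  "pol_mat P \<beta> s s' = P s (\<beta> s) s'"

fun mat_pow :: "('s::finite \<Rightarrow> 's \<Rightarrow> real) \<Rightarrow> nat \<Rightarrow> 's \<Rightarrow> 's \<Rightarrow> real" where
  "mat_pow Q 0 i j = (if i = j then 1 else 0)"
| "mat_pow Q (Suc n) i j = (\<Sum>k\<in>UNIV. mat_pow Q n i k * Q k j)"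

definition irreducible_chain :: "('s::finite \<Rightarrow> 's \<Rightarrow> real) \<Rightarrow> bool" where
  "irreducible_chain Q \<longleftrightarrow> (\<forall>i j. \<exists>n>0. mat_pow Q n i j > 0)"

definition period :: "('s::finite \<Rightarrow> 's \<Rightarrow> real) \<Rightarrow> 's \<Rightarrow> nat" where
  "period Q i = Gcd {n. n > 0 \<and> mat_pow Q n i i > 0}"

definition aperiodic_chain :: "('s::finite \<Rightarrow> 's \<Rightarrow> real) \<Rightarrow> bool" where
  "aperiodic_chain Q \<longleftrightarrow> (\<forall>i. period Q i = 1)"

definition is_stationary :: "('s::finite \<Rightarrow> 's \<Rightarrow> real) \<Rightarrow> ('s \<Rightarrow> real) \<Rightarrow> bool" where
  "is_stationary Q p \<longleftrightarrow> (\<forall>s. p s \<ge> 0) \<and> (\<Sum>s\<in>UNIV. p s) = 1 \<and>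
     (\<forall>s'. p s' = (\<Sum>s\<in>UNIV. p s * Q s s'))"

text \<open>The stationary distribution (unique for irreducible chains).\<close>
definition stat_dist :: "('s::finite \<Rightarrow> 's \<Rightarrow> real) \<Rightarrow> 's \<Rightarrow> real" where
  "stat_dist Q = (THE p. is_stationary Q p)"

definition rho :: "('s::finite \<Rightarrow> 'a \<Rightarrow> 's \<Rightarrow> real) \<Rightarrow> ('s \<Rightarrow> 'a) \<Rightarrow> ('s \<Rightarrow> 'a \<Rightarrow> real) \<Rightarrow> real" where
  "rho P \<beta> \<Theta> = (\<Sum>s\<in>UNIV. stat_dist (pol_mat P \<beta>) s * \<Theta> s (\<beta> s))"

text \<open>The linear program LP(\<Theta>); variables \<pi>(s,a) for a \<in> A_s (other values ignored).\<close>
definition lp_feasible :: "('s::finite \<Rightarrow> 'a set) \<Rightarrow> ('s \<Rightarrow> 'a \<Rightarrow> 's \<Rightarrow> real) \<Rightarrow> ('s \<Rightarrow> 'a \<Rightarrow> real) \<Rightarrow> bool" where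
  "lp_feasible Acts P \<pi> \<longleftrightarrow>
     (\<forall>s. \<forall>a\<in>Acts s. \<pi> s a \<ge> 0) \<and>
     (\<Sum>s\<in>UNIV. \<Sum>a\<in>Acts s. \<pi> s a) = 1 \<and>
     (\<forall>s'. (\<Sum>a\<in>Acts s'. \<pi> s' a) = (\<Sum>s\<in>UNIV. \<Sum>a\<in>Acts s. \<pi> s a * P s a s'))"

definition lp_obj :: "('s::finite \<Rightarrow> 'a set) \<Rightarrow> ('s \<Rightarrow> 'a \<Rightarrow> real) \<Rightarrow> ('s \<Rightarrow> 'a \<Rightarrow> real) \<Rightarrow> real" where
  "lp_obj Acts \<Theta> \<pi> = (\<Sum>s\<in>UNIV. \<Sum>a\<in>Acts s. \<pi> s a * \<Theta> s a)"

definition lp_optimal :: "('s::finite \<Rightarrow> 'a set) \<Rightarrow> ('s \<Rightarrow> 'a \<Rightarrow> 's \<Rightarrow> real) \<Rightarrow> ('s \<Rightarrow> 'a \<Rightarrow> real) \<Rightarrow> ('s \<Rightarrow> 'a \<Rightarrow> real) \<Rightarrow> bool" where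
  "lp_optimal Acts P \<Theta> \<pi> \<longleftrightarrow> lp_feasible Acts P \<pi> \<and>
     (\<forall>\<pi>'. lp_feasible Acts P \<pi>' \<longrightarrow> lp_obj Acts \<Theta> \<pi>' \<le> lp_obj Acts \<Theta> \<pi>)"

definition emp_mean :: "('s \<Rightarrow> 'a \<Rightarrow> 'x \<Rightarrow> real) \<Rightarrow> (nat \<Rightarrow> 'x) \<Rightarrow> nat \<Rightarrow> 's \<Rightarrow> 'a \<Rightarrow> real" where
  "emp_mean f xs n s a = (1 / real n) * (\<Sum>k<n. f s a (xs k))"

definition lpsm_choice :: "('s::finite \<Rightarrow> 'a set) \<Rightarrow> ('s \<Rightarrow> 'a \<Rightarrow> 's \<Rightarrow> real) \<Rightarrow> ('s \<Rightarrow> 'a \<Rightarrow> real) \<Rightarrow> ('s \<Rightarrow> 'a) \<Rightarrow> bool" where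
  "lpsm_choice Acts P \<Theta> \<beta> \<longleftrightarrow> (\<exists>\<pi>. lp_optimal Acts P \<Theta> \<pi> \<and>
     (\<forall>s. \<beta> s \<in> Acts s \<and> (\<forall>a\<in>Acts s. \<pi> s a \<le> \<pi> s (\<beta> s))))"

definition first_stable :: "(nat \<Rightarrow> 's \<Rightarrow> 'a) \<Rightarrow> ('s \<Rightarrow> 'a) \<Rightarrow> ennreal" where
  "first_stable bs bstar = (INF z\<in>{z::nat. z \<ge> 1 \<and> (\<forall>t\<ge>z. bs t = bstar)}. ennreal (real z))"

end

theory Submission
  imports Defs
begin

text \<open>
  For an irreducible chain, \<open>I - Q\<close> has rank \<open>|S| - 1\<close>; this yields a unique, strictly positive
  stationary distribution and solvability of the Poisson equation. Hence the occupation measure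
  of every admissible policy \<open>\<beta>\<close> is a feasible point of LP(\<open>\<Theta>\<close>) with value \<open>\<rho>(\<beta>, \<Theta>)\<close>, and the
  relative value function of \<open>\<beta>*\<close> defines reduced costs \<open>D(s, a)\<close> with
  \<open>\<Sum> \<pi>(s, a) D(s, a) = \<rho>(\<beta>*, \<Theta>) - obj(\<pi>)\<close> for every feasible \<open>\<pi>\<close>. They vanish on \<open>\<beta>*\<close> and, by
  the gap \<open>\<Delta>\<^sub>1 > 0\<close>, are bounded below by some \<open>\<delta> > 0\<close> elsewhere.

  If \<open>\<Theta>\<close> is \<open>\<epsilon>\<close>-close to the true means, an optimal \<open>\<pi>\<close> of LP(\<open>\<Theta>\<close>) is \<open>2\<epsilon>\<close>-optimal for the true
  means, so it puts mass \<open>O(\<epsilon>)\<close> on suboptimal actions, while each state keeps mass close to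
  \<open>\<pi>\<^sub>\<beta>\<^sub>*(s) > 0\<close>: the argmax in every state is \<open>\<beta>*(s)\<close>. By Hoeffding's inequality the empirical
  means fail to be \<open>\<epsilon>\<close>-close at slot \<open>n\<close> with probability \<open>O(e\<^sup>-\<^sup>c\<^sup>n)\<close>, and
  \<open>Z \<le> 1 + \<Sum>\<^sub>n n \<cdot> [\<beta>\<^sub>n \<noteq> \<beta>*]\<close>, whose expectation is at most \<open>1 + \<Sum>\<^sub>n n C e\<^sup>-\<^sup>c\<^sup>n < \<infinity>\<close>.
\<close>

section \<open>Stationary distributions of irreducible stochastic matrices\<close>

definition stochastic :: "('s::finite \<Rightarrow> 's \<Rightarrow> real) \<Rightarrow> bool" where
  "stochastic Q \<longleftrightarrow> (\<forall>i j. Q i j \<ge> 0) \<and> (\<forall>i. (\<Sum>j\<in>UNIV. Q i j) = 1)"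

lemma mat_pow_nonneg:
  assumes "stochastic Q" shows "mat_pow Q n i j \<ge> 0"
  using assms
  by (induction n arbitrary: j) (auto simp: stochastic_def intro!: sum_nonneg mult_nonneg_nonneg)

lemma mat_pow_Suc_pos_step:
  assumes "stochastic Q" "mat_pow Q (Suc n) i j > 0"
  shows "\<exists>k. mat_pow Q n i k > 0 \<and> Q k j > 0"
proof (rule ccontr)
  assume "\<not> ?thesis"
  then have "\<forall>k. mat_pow Q n i k * Q k j = 0"
    using mat_pow_nonneg[OF assms(1)] assms(1) unfolding stochastic_def
    by (metis less_eq_real_def mult_eq_0_iff)
  then have "(\<Sum>k\<in>UNIV. mat_pow Q n i k * Q k j) = 0" by (intro sum.neutral) auto
  then show False using assms(2) by simp
qed

text \<open>Maximum principle: the set where a harmonic function attains its maximum is closed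
  under transitions, hence everything by irreducibility.\<close>
lemma irreducible_harmonic_const:
  assumes st: "stochastic Q" and irr: "irreducible_chain Q"
    and h: "\<And>i. h i = (\<Sum>j\<in>UNIV. Q i j * h j)"
  shows "h i = h j"
proof -
  define m where "m = Max (range h)"
  have "m \<in> range h" unfolding m_def by (rule Max_in) auto
  then obtain i0 where i0: "h i0 = m" by auto
  have le: "h k \<le> m" for k unfolding m_def by simp
  have step: "h l = m" if hk: "h k = m" and Q: "Q k l > 0" for k l
  proof -
    have "(\<Sum>j\<in>UNIV. Q k j * (m - h j)) = m * (\<Sum>j\<in>UNIV. Q k j) - (\<Sum>j\<in>UNIV. Q k j * h j)"
      by (simp add: algebra_simps sum_subtractf sum_distrib_left)
    also have "\<dots> = 0" using h[of k] hk st by (simp add: stochastic_def)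
    finally have "\<forall>j\<in>UNIV. Q k j * (m - h j) = 0"
      by (subst (asm) sum_nonneg_eq_0_iff) (use st le in \<open>auto simp: stochastic_def\<close>)
    then show "h l = m" using Q by force
  qed
  have reach: "h j = m" if "mat_pow Q n i0 j > 0" for n j
    using that
  proof (induction n arbitrary: j)
    case 0 then show ?case using i0 by (auto split: if_splits)
  next
    case (Suc n)
    then obtain k where "mat_pow Q n i0 k > 0" "Q k j > 0"
      using mat_pow_Suc_pos_step[OF st] by blast
    then show ?case using Suc step by blast
  qed
  have "h x = m" for x using irr reach unfolding irreducible_chain_def by blast
  then show ?thesis by simp
qed

lemma is_stationary_nonneg: "is_stationary Q x \<Longrightarrow> x s \<ge> 0"
  and is_stationary_sum: "is_stationary Q x \<Longrightarrow> (\<Sum>s\<in>UNIV. x s) = 1"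
  and is_stationary_eq: "is_stationary Q x \<Longrightarrow> x s' = (\<Sum>s\<in>UNIV. x s * Q s s')"
  unfolding is_stationary_def by blast+

lemma is_stationary_sum_mult:
  assumes "is_stationary Q x"
  shows "(\<Sum>i\<in>UNIV. x i * (\<Sum>k\<in>UNIV. Q i k * h k)) = (\<Sum>k\<in>UNIV. x k * h k)"
proof -
  have "(\<Sum>i\<in>UNIV. x i * (\<Sum>k\<in>UNIV. Q i k * h k)) = (\<Sum>k\<in>UNIV. (\<Sum>i\<in>UNIV. x i * Q i k) * h k)"
    by (simp add: sum_distrib_left sum_distrib_right mult.assoc) (rule sum.swap)
  also have "\<dots> = (\<Sum>k\<in>UNIV. x k * h k)"
    by (simp only: is_stationary_eq[OF assms, symmetric])
  finally show ?thesis .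
qed

lemma is_stationary_mat_pow:
  assumes "is_stationary Q x"
  shows "x j = (\<Sum>i\<in>UNIV. x i * mat_pow Q n i j)"
proof (induction n arbitrary: j)
  case 0
  have "(\<Sum>i\<in>UNIV. x i * mat_pow Q 0 i j) = (\<Sum>i\<in>UNIV. if i = j then x i else 0)"
    by (rule sum.cong) auto
  then show ?case by simp
next
  case (Suc n)
  have "(\<Sum>i\<in>UNIV. x i * mat_pow Q (Suc n) i j)
      = (\<Sum>k\<in>UNIV. (\<Sum>i\<in>UNIV. x i * mat_pow Q n i k) * Q k j)"
    by (simp add: sum_distrib_left sum_distrib_right mult.assoc) (rule sum.swap)
  also have "\<dots> = x j" by (simp only: Suc[symmetric] is_stationary_eq[OF assms, symmetric])
  finally show ?case by (rule sym)
qed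

lemma is_stationary_pos:
  assumes st: "stochastic Q" and irr: "irreducible_chain Q" and x: "is_stationary Q x"
  shows "x j > 0"
proof -
  have "\<exists>i. x i > 0"
  proof (rule ccontr)
    assume "\<nexists>i. x i > 0"
    then have "\<forall>s. x s = 0" using is_stationary_nonneg[OF x] by (metis antisym not_less)
    then show False using is_stationary_sum[OF x] by simp
  qed
  then obtain i where xi: "x i > 0" by blast
  obtain n where n: "mat_pow Q n i j > 0" using irr unfolding irreducible_chain_def by blast
  have "0 < x i * mat_pow Q n i j" using xi n by simp
  also have "\<dots> \<le> (\<Sum>k\<in>UNIV. x k * mat_pow Q n k j)"
    by (rule member_le_sum)
      (auto intro!: mult_nonneg_nonneg is_stationary_nonneg[OF x] mat_pow_nonneg[OF st])
  also have "\<dots> = x j" by (rule is_stationary_mat_pow[OF x, symmetric])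
  finally show ?thesis .
qed

definition id_minus_mat :: "('s::finite \<Rightarrow> 's \<Rightarrow> real) \<Rightarrow> real^'s^'s" where
  "id_minus_mat Q = (\<chi> i. \<chi> j. (if i = j then 1 else 0) - Q i j)"

lemma id_minus_mat_mult:
  "(id_minus_mat Q *v v) $ i = v $ i - (\<Sum>j\<in>UNIV. Q i j * v $ j)"
proof -
  have "(id_minus_mat Q *v v) $ i = (\<Sum>j\<in>UNIV. (if i = j then v $ j else 0) - Q i j * v $ j)"
    unfolding matrix_vector_mult_def id_minus_mat_def
    by (auto intro!: sum.cong simp: left_diff_distrib)
  then show ?thesis by (simp add: sum_subtractf)
qed

lemma transpose_id_minus_mat_mult:
  "(transpose (id_minus_mat Q) *v v) $ j = v $ j - (\<Sum>i\<in>UNIV. Q i j * v $ i)"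
proof -
  have "(transpose (id_minus_mat Q) *v v) $ j
      = (\<Sum>i\<in>UNIV. (if j = i then v $ i else 0) - Q i j * v $ i)"
    unfolding matrix_vector_mult_def id_minus_mat_def transpose_def
    by (auto intro!: sum.cong simp: left_diff_distrib)
  then show ?thesis by (simp add: sum_subtractf)
qed

text \<open>Irreducibility makes the kernel of \<open>I - Q\<close> exactly the constant vectors.\<close>
lemma rank_id_minus_mat:
  fixes Q :: "'s::finite \<Rightarrow> 's \<Rightarrow> real"
  assumes st: "stochastic Q" and irr: "irreducible_chain Q"
  shows "rank (id_minus_mat Q) = CARD('s) - 1"
proof -
  have "id_minus_mat Q *v vec 1 = 0"
    using st by (simp add: vec_eq_iff id_minus_mat_mult stochastic_def)
  moreover have "vec 1 \<noteq> (0::real^'s)" by (simp add: vec_eq_iff)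
  ultimately have "\<not> inj ((*v) (id_minus_mat Q))"
    by (metis injD matrix_vector_mult_0_right)
  then have "rank (id_minus_mat Q) \<noteq> CARD('s)" using full_rank_injective by blast
  moreover have "rank (id_minus_mat Q) \<le> CARD('s)" using rank_bound[of "id_minus_mat Q"] by simp
  moreover have "rank (id_minus_mat Q) \<ge> CARD('s) - 1"
  proof -
    fix s0 :: 's
    define H where "H = {v::real^'s. axis s0 1 \<bullet> v = 0}"
    have dH: "dim H = CARD('s) - 1"
      unfolding H_def by (subst dim_hyperplane) (auto simp: axis_eq_0_iff)
    have sH: "span H = H" unfolding H_def by (simp add: subspace_hyperplane)
    have "inj_on ((*v) (id_minus_mat Q)) (span H)"
    proof (rule inj_onI)
      fix v w assume vw: "v \<in> span H" "w \<in> span H" "id_minus_mat Q *v v = id_minus_mat Q *v w"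
      have "(v - w) $ i = (v - w) $ s0" for i
      proof (rule irreducible_harmonic_const[OF st irr])
        fix i
        have "(id_minus_mat Q *v (v - w)) $ i = 0"
          using vw(3) by (simp add: matrix_vector_mult_diff_distrib)
        then show "(v - w) $ i = (\<Sum>j\<in>UNIV. Q i j * (v - w) $ j)"
          unfolding id_minus_mat_mult by linarith
      qed
      moreover have "v \<in> H" "w \<in> H" using vw(1,2) sH by auto
      then have "(v - w) $ s0 = 0" unfolding H_def by (simp add: inner_axis')
      ultimately show "v = w" by (simp add: vec_eq_iff)
    qed
    then have "dim ((*v) (id_minus_mat Q) ` H) = dim H"
      by (rule eucl.dim_image_eq[OF matrix_vector_mul_linear])
    moreover have "dim ((*v) (id_minus_mat Q) ` H) \<le> dim (range ((*v) (id_minus_mat Q)))"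
      by (rule dim_subset) auto
    ultimately show ?thesis using dH rank_dim_range[of "id_minus_mat Q"] by simp
  qed
  ultimately show ?thesis by linarith
qed

text \<open>Since \<open>I - Q\<close> is singular, so is its transpose; the absolute values of a nonzero
  left null vector form a subinvariant, hence invariant, measure.\<close>
lemma is_stationary_exists:
  fixes Q :: "'s::finite \<Rightarrow> 's \<Rightarrow> real"
  assumes st: "stochastic Q" and irr: "irreducible_chain Q"
  shows "\<exists>x. is_stationary Q x"
proof -
  have "0 < CARD('s)" by simp
  then have "rank (transpose (id_minus_mat Q)) \<noteq> CARD('s)"
    using rank_id_minus_mat[OF st irr] rank_transpose[of "id_minus_mat Q"] by linarith
  then have "\<not> inj ((*v) (transpose (id_minus_mat Q)))" using full_rank_injective by blast
  then obtain u w where uw: "u \<noteq> w" "transpose (id_minus_mat Q) *v u = transpose (id_minus_mat Q) *v w"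
    unfolding inj_def by blast
  define y where "y = u - w"
  have "transpose (id_minus_mat Q) *v y = 0"
    using uw unfolding y_def by (simp add: matrix_vector_mult_diff_distrib)
  then have yeq: "y $ j = (\<Sum>i\<in>UNIV. Q i j * y $ i)" for j
    using transpose_id_minus_mat_mult[of Q y j] by (metis eq_iff_diff_eq_0 zero_index)
  define z where "z j = \<bar>y $ j\<bar>" for j
  have Qnn: "Q i j \<ge> 0" for i j using st by (simp add: stochastic_def)
  have znn: "z j \<ge> 0" for j by (simp add: z_def)
  have zle: "z j \<le> (\<Sum>i\<in>UNIV. Q i j * z i)" for j
  proof -
    have "z j = \<bar>\<Sum>i\<in>UNIV. Q i j * y $ i\<bar>" unfolding z_def by (simp only: yeq[of j])
    also have "\<dots> \<le> (\<Sum>i\<in>UNIV. \<bar>Q i j * y $ i\<bar>)" by (rule sum_abs)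
    also have "\<dots> = (\<Sum>i\<in>UNIV. Q i j * z i)" unfolding z_def by (simp add: abs_mult Qnn)
    finally show ?thesis .
  qed
  have "(\<Sum>j\<in>UNIV. \<Sum>i\<in>UNIV. Q i j * z i) = (\<Sum>i\<in>UNIV. z i * (\<Sum>j\<in>UNIV. Q i j))"
    by (subst sum.swap) (simp add: sum_distrib_left mult.commute)
  also have "\<dots> = (\<Sum>i\<in>UNIV. z i)" using st by (simp add: stochastic_def)
  finally have "(\<Sum>j\<in>UNIV. (\<Sum>i\<in>UNIV. Q i j * z i) - z j) = 0"
    by (simp add: sum_subtractf)
  then have "\<forall>j\<in>UNIV. (\<Sum>i\<in>UNIV. Q i j * z i) - z j = 0"
    by (subst (asm) sum_nonneg_eq_0_iff) (use zle in auto)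
  then have zst: "z j = (\<Sum>i\<in>UNIV. z i * Q i j)" for j
    by (simp add: mult.commute)
  define S where "S = (\<Sum>j\<in>UNIV. z j)"
  obtain j0 where "y $ j0 \<noteq> 0" using uw(1) unfolding y_def by (metis eq_iff_diff_eq_0 vec_eq_iff zero_index)
  then have "0 < z j0" by (simp add: z_def)
  also have "z j0 \<le> S" unfolding S_def by (rule member_le_sum) (auto simp: znn)
  finally have Spos: "S > 0" .
  have "is_stationary Q (\<lambda>j. z j / S)"
    unfolding is_stationary_def
  proof (intro conjI allI)
    show "z s / S \<ge> 0" for s using znn Spos by simp
    show "(\<Sum>s\<in>UNIV. z s / S) = 1" using Spos by (simp add: S_def flip: sum_divide_distrib)
    show "z s' / S = (\<Sum>s\<in>UNIV. z s / S * Q s s')" for s'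
      by (simp add: zst[of s'] sum_divide_distrib)
  qed
  then show ?thesis by blast
qed

text \<open>The range of \<open>I - Q\<close> is the hyperplane orthogonal to a stationary distribution \<open>x\<close>:
  it is contained in it, and both have dimension \<open>CARD('s) - 1\<close>.\<close>
lemma poisson_equation_solvable:
  fixes Q :: "'s::finite \<Rightarrow> 's \<Rightarrow> real"
  assumes st: "stochastic Q" and irr: "irreducible_chain Q" and x: "is_stationary Q x"
  shows "\<exists>h. \<forall>i. h i = r i - (\<Sum>j\<in>UNIV. x j * r j) + (\<Sum>j\<in>UNIV. Q i j * h j)"
proof -
  define g where "g = (\<Sum>j\<in>UNIV. x j * r j)"
  define xv where "xv = ((\<chi> i. x i) :: real^'s)"
  have xv0: "xv \<noteq> 0"
  proof
    assume "xv = 0" then have "\<forall>s. x s = 0" by (simp add: xv_def vec_eq_iff)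
    then show False using is_stationary_sum[OF x] by simp
  qed
  define H where "H = {v::real^'s. xv \<bullet> v = 0}"
  have "range ((*v) (id_minus_mat Q)) = H"
  proof (rule subspace_dim_equal)
    show "subspace (range ((*v) (id_minus_mat Q)))"
      by (rule linear_subspace_image[OF matrix_vector_mul_linear subspace_UNIV])
    show "subspace H" unfolding H_def by (rule subspace_hyperplane)
    show "range ((*v) (id_minus_mat Q)) \<subseteq> H"
    proof clarify
      fix v :: "real^'s"
      have "xv \<bullet> (id_minus_mat Q *v v)
          = (\<Sum>i\<in>UNIV. x i * v $ i) - (\<Sum>i\<in>UNIV. x i * (\<Sum>j\<in>UNIV. Q i j * v $ j))"
        by (simp add: inner_vec_def xv_def id_minus_mat_mult right_diff_distrib sum_subtractf)
      then show "id_minus_mat Q *v v \<in> H"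
        unfolding H_def using is_stationary_sum_mult[OF x, of "\<lambda>j. v $ j"] by simp
    qed
    show "dim H \<le> dim (range ((*v) (id_minus_mat Q)))"
      using rank_id_minus_mat[OF st irr] rank_dim_range[of "id_minus_mat Q"]
      unfolding H_def by (simp add: dim_hyperplane[OF xv0])
  qed
  moreover have "(\<chi> i. r i - g) \<in> H"
  proof -
    have "xv \<bullet> (\<chi> i. r i - g) = (\<Sum>i\<in>UNIV. x i * r i) - g * (\<Sum>i\<in>UNIV. x i)"
      by (simp add: inner_vec_def xv_def right_diff_distrib sum_subtractf sum_distrib_left mult.commute)
    then show ?thesis unfolding H_def by (simp add: is_stationary_sum[OF x] g_def)
  qed
  ultimately obtain v where v: "id_minus_mat Q *v v = (\<chi> i. r i - g)" by (metis rangeE)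
  have "v $ i = r i - g + (\<Sum>j\<in>UNIV. Q i j * v $ j)" for i
    using arg_cong[OF v, of "\<lambda>u. u $ i"] by (simp add: id_minus_mat_mult)
  then show ?thesis unfolding g_def by blast
qed

text \<open>Solve the Poisson equation for the indicator reward of \<open>j\<close> w.r.t. \<open>x\<close> and average it
  against \<open>y\<close>: the left-hand side vanishes and what remains is \<open>y j - x j\<close>.\<close>
lemma is_stationary_unique:
  fixes Q :: "'s::finite \<Rightarrow> 's \<Rightarrow> real"
  assumes st: "stochastic Q" and irr: "irreducible_chain Q"
    and x: "is_stationary Q x" and y: "is_stationary Q y"
  shows "x = y"
proof
  fix j
  define r where "r i = (if i = j then 1 else (0::real))" for i :: 's
  have rx: "(\<Sum>k\<in>UNIV. x k * r k) = x j" and ry: "(\<Sum>k\<in>UNIV. y k * r k) = y j"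
    by (simp_all add: r_def if_distrib cong: if_cong)
  obtain h where "\<forall>i. h i = r i - x j + (\<Sum>k\<in>UNIV. Q i k * h k)"
    using poisson_equation_solvable[OF st irr x, of r] unfolding rx by blast
  then have h: "h i - (\<Sum>k\<in>UNIV. Q i k * h k) = r i - x j" for i by (simp add: algebra_simps)
  have "0 = (\<Sum>i\<in>UNIV. y i * (h i - (\<Sum>k\<in>UNIV. Q i k * h k)))"
    using is_stationary_sum_mult[OF y, of h] by (simp add: right_diff_distrib sum_subtractf)
  also have "\<dots> = (\<Sum>i\<in>UNIV. y i * (r i - x j))" by (simp only: h)
  also have "\<dots> = (\<Sum>i\<in>UNIV. y i * r i) - x j * (\<Sum>i\<in>UNIV. y i)"
    by (simp add: right_diff_distrib sum_subtractf sum_distrib_left mult.commute)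
  also have "\<dots> = y j - x j" by (simp add: ry is_stationary_sum[OF y])
  finally show "x j = y j" by simp
qed

lemma stat_dist_is_stationary:
  assumes st: "stochastic Q" and irr: "irreducible_chain Q"
  shows "is_stationary Q (stat_dist Q)"
proof -
  obtain x where x: "is_stationary Q x" using is_stationary_exists[OF st irr] by blast
  have "stat_dist Q = x" unfolding stat_dist_def
    using is_stationary_unique[OF st irr x] x by blast
  then show ?thesis using x by simp
qed

section \<open>Occupation measures and reduced costs\<close>

lemma lp_feasible_nonneg: "lp_feasible Acts P \<pi> \<Longrightarrow> a \<in> Acts s \<Longrightarrow> \<pi> s a \<ge> 0"
  and lp_feasible_total: "lp_feasible Acts P \<pi> \<Longrightarrow> (\<Sum>s\<in>UNIV. \<Sum>a\<in>Acts s. \<pi> s a) = 1"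
  and lp_feasible_balance: "lp_feasible Acts P \<pi> \<Longrightarrow>
     (\<Sum>a\<in>Acts s'. \<pi> s' a) = (\<Sum>s\<in>UNIV. \<Sum>a\<in>Acts s. \<pi> s a * P s a s')"
  unfolding lp_feasible_def by blast+

text \<open>Against a feasible \<open>\<pi>\<close> the terms \<open>h s\<close> and \<open>\<Sum>s'. P s a s' * h s'\<close> cancel by the
  balance equations, for any \<open>g\<close> and \<open>h\<close>.\<close>
lemma lp_feasible_potential_identity:
  fixes \<pi> :: "'s::finite \<Rightarrow> 'a \<Rightarrow> real"
  assumes F: "lp_feasible Acts P \<pi>"
  shows "(\<Sum>s\<in>UNIV. \<Sum>a\<in>Acts s. \<pi> s a * (g + h s - r s a - (\<Sum>s'\<in>UNIV. P s a s' * h s')))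
         = g - lp_obj Acts r \<pi>"
proof -
  have "(\<Sum>s\<in>UNIV. \<Sum>a\<in>Acts s. \<pi> s a * (\<Sum>s'\<in>UNIV. P s a s' * h s'))
      = (\<Sum>s\<in>UNIV. \<Sum>s'\<in>UNIV. \<Sum>a\<in>Acts s. \<pi> s a * P s a s' * h s')"
    by (simp add: sum_distrib_left mult.assoc) (rule sum.cong[OF refl], rule sum.swap)
  also have "\<dots> = (\<Sum>s'\<in>UNIV. (\<Sum>s\<in>UNIV. \<Sum>a\<in>Acts s. \<pi> s a * P s a s') * h s')"
    by (subst sum.swap) (simp add: sum_distrib_right)
  also have "\<dots> = (\<Sum>s\<in>UNIV. \<Sum>a\<in>Acts s. \<pi> s a * h s)"
    by (simp add: lp_feasible_balance[OF F, symmetric] sum_distrib_right)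
  finally have balance: "(\<Sum>s\<in>UNIV. \<Sum>a\<in>Acts s. \<pi> s a * (\<Sum>s'\<in>UNIV. P s a s' * h s'))
      = (\<Sum>s\<in>UNIV. \<Sum>a\<in>Acts s. \<pi> s a * h s)" .
  have "(\<Sum>s\<in>UNIV. \<Sum>a\<in>Acts s. \<pi> s a * (g + h s - r s a - (\<Sum>s'\<in>UNIV. P s a s' * h s')))
     = (\<Sum>s\<in>UNIV. \<Sum>a\<in>Acts s. \<pi> s a) * g + (\<Sum>s\<in>UNIV. \<Sum>a\<in>Acts s. \<pi> s a * h s)
       - lp_obj Acts r \<pi> - (\<Sum>s\<in>UNIV. \<Sum>a\<in>Acts s. \<pi> s a * (\<Sum>s'\<in>UNIV. P s a s' * h s'))"
    by (simp add: lp_obj_def algebra_simps sum.distrib sum_subtractf sum_distrib_left)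
  then show ?thesis by (simp add: balance lp_feasible_total[OF F])
qed

lemma lp_obj_perturb:
  assumes F: "lp_feasible Acts P \<pi>" and close: "\<forall>s. \<forall>a\<in>Acts s. \<bar>\<Theta> s a - \<mu> s a\<bar> \<le> \<epsilon>"
  shows "\<bar>lp_obj Acts \<Theta> \<pi> - lp_obj Acts \<mu> \<pi>\<bar> \<le> \<epsilon>"
proof -
  have "lp_obj Acts \<Theta> \<pi> - lp_obj Acts \<mu> \<pi> = (\<Sum>s\<in>UNIV. \<Sum>a\<in>Acts s. \<pi> s a * (\<Theta> s a - \<mu> s a))"
    unfolding lp_obj_def by (simp add: right_diff_distrib sum_subtractf)
  also have "\<bar>\<dots>\<bar> \<le> (\<Sum>s\<in>UNIV. \<Sum>a\<in>Acts s. \<bar>\<pi> s a * (\<Theta> s a - \<mu> s a)\<bar>)"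
    by (rule order_trans[OF sum_abs sum_mono]) (rule sum_abs)
  also have "\<dots> \<le> (\<Sum>s\<in>UNIV. \<Sum>a\<in>Acts s. \<pi> s a * \<epsilon>)"
    by (intro sum_mono) (use lp_feasible_nonneg[OF F] close in \<open>simp add: abs_mult mult_left_mono\<close>)
  also have "\<dots> = \<epsilon>" using lp_feasible_total[OF F] by (simp add: sum_distrib_right[symmetric])
  finally show ?thesis .
qed

lemma finite_pos_lower_bound:
  assumes "finite S" "\<And>x. x \<in> S \<Longrightarrow> (f x::real) > 0"
  shows "\<exists>\<delta>>0. \<forall>x\<in>S. \<delta> \<le> f x"
proof (cases "S = {}")
  case False
  then have "Min (f ` S) > 0" using assms Min_in[of "f ` S"] by auto
  then show ?thesis using assms(1) by auto
qed (auto intro: exI[of _ 1])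

locale irreducible_mdp =
  fixes Acts :: "'s::finite \<Rightarrow> 'a::finite set"
    and P :: "'s \<Rightarrow> 'a \<Rightarrow> 's \<Rightarrow> real"
    and bstar :: "'s \<Rightarrow> 'a"
  assumes P_nonneg: "\<And>s a s'. a \<in> Acts s \<Longrightarrow> P s a s' \<ge> 0"
    and P_sum: "\<And>s a. a \<in> Acts s \<Longrightarrow> (\<Sum>s'\<in>UNIV. P s a s') = 1"
    and irreducible: "\<And>\<beta>. admissible Acts \<beta> \<Longrightarrow> irreducible_chain (pol_mat P \<beta>)"
    and bstar_adm: "admissible Acts bstar"
begin

abbreviation pol_stat :: "('s \<Rightarrow> 'a) \<Rightarrow> 's \<Rightarrow> real" where
  "pol_stat \<beta> \<equiv> stat_dist (pol_mat P \<beta>)"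

definition occupation :: "('s \<Rightarrow> 'a) \<Rightarrow> 's \<Rightarrow> 'a \<Rightarrow> real" where
  "occupation \<beta> s a = (if a = \<beta> s then pol_stat \<beta> s else 0)"

lemma stochastic_pol_mat: "admissible Acts \<beta> \<Longrightarrow> stochastic (pol_mat P \<beta>)"
  unfolding stochastic_def pol_mat_def admissible_def using P_nonneg P_sum by blast

lemma pol_stat_is_stationary: "admissible Acts \<beta> \<Longrightarrow> is_stationary (pol_mat P \<beta>) (pol_stat \<beta>)"
  by (rule stat_dist_is_stationary[OF stochastic_pol_mat irreducible])

lemma pol_stat_pos: "admissible Acts \<beta> \<Longrightarrow> pol_stat \<beta> s > 0"
  by (rule is_stationary_pos[OF stochastic_pol_mat irreducible pol_stat_is_stationary])

lemma sum_occupation: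
  assumes "admissible Acts \<beta>"
  shows "(\<Sum>a\<in>Acts s. occupation \<beta> s a * F a) = pol_stat \<beta> s * F (\<beta> s)"
proof -
  have "(\<Sum>a\<in>Acts s. occupation \<beta> s a * F a) = (\<Sum>a\<in>Acts s. if a = \<beta> s then pol_stat \<beta> s * F a else 0)"
    by (rule sum.cong) (auto simp: occupation_def)
  then show ?thesis using assms by (simp add: admissible_def)
qed

lemma occupation_feasible:
  assumes adm: "admissible Acts \<beta>"
  shows "lp_feasible Acts P (occupation \<beta>)"
proof -
  note st = pol_stat_is_stationary[OF adm]
  have mass: "(\<Sum>a\<in>Acts s. occupation \<beta> s a) = pol_stat \<beta> s" for s
    using sum_occupation[OF adm, of s "\<lambda>_. 1"] by simp
  show ?thesis unfolding lp_feasible_def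
  proof (intro conjI allI ballI)
    show "occupation \<beta> s a \<ge> 0" for s a
      using is_stationary_nonneg[OF st] by (simp add: occupation_def)
    show "(\<Sum>s\<in>UNIV. \<Sum>a\<in>Acts s. occupation \<beta> s a) = 1"
      by (simp only: mass is_stationary_sum[OF st])
    show "(\<Sum>a\<in>Acts s'. occupation \<beta> s' a) = (\<Sum>s\<in>UNIV. \<Sum>a\<in>Acts s. occupation \<beta> s a * P s a s')"
      for s'
      using is_stationary_eq[OF st, of s']
      by (simp add: mass sum_occupation[OF adm] pol_mat_def)
  qed
qed

lemma lp_obj_occupation: "admissible Acts \<beta> \<Longrightarrow> lp_obj Acts \<Theta> (occupation \<beta>) = rho P \<beta> \<Theta>"
  unfolding lp_obj_def rho_def by (simp add: sum_occupation)

definition bias :: "('s \<Rightarrow> 'a \<Rightarrow> real) \<Rightarrow> 's \<Rightarrow> real" where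
  "bias r = (SOME h. \<forall>i. h i = r i (bstar i) - rho P bstar r + (\<Sum>j\<in>UNIV. P i (bstar i) j * h j))"

definition reduced_cost :: "('s \<Rightarrow> 'a \<Rightarrow> real) \<Rightarrow> 's \<Rightarrow> 'a \<Rightarrow> real" where
  "reduced_cost r s a = rho P bstar r + bias r s - r s a - (\<Sum>s'\<in>UNIV. P s a s' * bias r s')"

lemma bias_poisson:
  "bias r i = r i (bstar i) - rho P bstar r + (\<Sum>j\<in>UNIV. P i (bstar i) j * bias r j)"
proof -
  have "\<exists>h. \<forall>i. h i = r i (bstar i) - rho P bstar r + (\<Sum>j\<in>UNIV. P i (bstar i) j * h j)"
    using poisson_equation_solvable[OF stochastic_pol_mat irreducible pol_stat_is_stationary,
        OF bstar_adm bstar_adm bstar_adm, of "\<lambda>i. r i (bstar i)"]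
    unfolding rho_def pol_mat_def .
  then show ?thesis unfolding bias_def by (rule someI_ex[THEN spec])
qed

lemma reduced_cost_bstar: "reduced_cost r s (bstar s) = 0"
  using bias_poisson[of r s] unfolding reduced_cost_def by linarith

lemma lp_feasible_reduced_cost_eq:
  assumes "lp_feasible Acts P \<pi>"
  shows "(\<Sum>s\<in>UNIV. \<Sum>a\<in>Acts s. \<pi> s a * reduced_cost r s a) = rho P bstar r - lp_obj Acts r \<pi>"
  unfolding reduced_cost_def by (rule lp_feasible_potential_identity[OF assms])

text \<open>Test the reduced-cost identity on the occupation measure of the single-state deviation
  \<open>bstar(s := a)\<close>: only the term at \<open>s\<close> survives.\<close>
lemma reduced_cost_pos:
  assumes gap: "\<And>\<beta>. admissible Acts \<beta> \<Longrightarrow> \<beta> \<noteq> bstar \<Longrightarrow> rho P \<beta> \<mu> < rho P bstar \<mu>"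
    and a: "a \<in> Acts s" "a \<noteq> bstar s"
  shows "reduced_cost \<mu> s a > 0"
proof -
  define \<beta> where "\<beta> = bstar(s := a)"
  have adm: "admissible Acts \<beta>" using bstar_adm a unfolding admissible_def \<beta>_def by auto
  have "\<beta> \<noteq> bstar" using a unfolding \<beta>_def by (metis fun_upd_same)
  then have "0 < rho P bstar \<mu> - rho P \<beta> \<mu>" using gap[OF adm] by simp
  also have "\<dots> = (\<Sum>t\<in>UNIV. pol_stat \<beta> t * reduced_cost \<mu> t (\<beta> t))"
    using lp_feasible_reduced_cost_eq[OF occupation_feasible[OF adm], of \<mu>]
    by (simp add: sum_occupation[OF adm] lp_obj_occupation[OF adm])
  also have "\<dots> = pol_stat \<beta> s * reduced_cost \<mu> s a"
    by (simp add: \<beta>_def reduced_cost_bstar if_distrib cong: if_cong)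
  finally show ?thesis using pol_stat_pos[OF adm, of s] by (simp add: zero_less_mult_iff)
qed

end

section \<open>Stability of the LP policy under perturbation of the rewards\<close>

context irreducible_mdp
begin

definition off_mass :: "('s \<Rightarrow> 'a \<Rightarrow> real) \<Rightarrow> real" where
  "off_mass \<pi> = (\<Sum>s\<in>UNIV. \<Sum>a\<in>Acts s - {bstar s}. \<pi> s a)"

lemma bstar_in_Acts: "bstar s \<in> Acts s"
  using bstar_adm unfolding admissible_def by blast

lemma sum_Acts_split: "(\<Sum>a\<in>Acts s. F a) = F (bstar s) + (\<Sum>a\<in>Acts s - {bstar s}. F a)"
  by (rule sum.remove[OF finite bstar_in_Acts])

lemma lp_feasible_reduced_cost_off:
  assumes "lp_feasible Acts P \<pi>"
  shows "rho P bstar r - lp_obj Acts r \<pi>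
       = (\<Sum>s\<in>UNIV. \<Sum>a\<in>Acts s - {bstar s}. \<pi> s a * reduced_cost r s a)"
  by (simp add: lp_feasible_reduced_cost_eq[OF assms, symmetric] sum_Acts_split reduced_cost_bstar)

lemma lp_gap_abs_le_off_mass:
  assumes F: "lp_feasible Acts P \<pi>"
    and K: "\<And>s a. a \<in> Acts s - {bstar s} \<Longrightarrow> \<bar>reduced_cost r s a\<bar> \<le> K"
  shows "\<bar>rho P bstar r - lp_obj Acts r \<pi>\<bar> \<le> K * off_mass \<pi>"
proof -
  have "\<bar>rho P bstar r - lp_obj Acts r \<pi>\<bar>
      \<le> (\<Sum>s\<in>UNIV. \<Sum>a\<in>Acts s - {bstar s}. \<bar>\<pi> s a * reduced_cost r s a\<bar>)"
    unfolding lp_feasible_reduced_cost_off[OF F]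
    by (rule order_trans[OF sum_abs sum_mono]) (rule sum_abs)
  also have "\<dots> \<le> (\<Sum>s\<in>UNIV. \<Sum>a\<in>Acts s - {bstar s}. K * \<pi> s a)"
  proof (intro sum_mono)
    fix s a assume a: "a \<in> Acts s - {bstar s}"
    have "\<pi> s a \<ge> 0" using a lp_feasible_nonneg[OF F] by blast
    then show "\<bar>\<pi> s a * reduced_cost r s a\<bar> \<le> K * \<pi> s a"
      using mult_left_mono[OF K[OF a]] by (simp add: abs_mult mult.commute[of K])
  qed
  finally show ?thesis by (simp add: off_mass_def sum_distrib_left)
qed

lemma off_mass_le_lp_gap:
  assumes F: "lp_feasible Acts P \<pi>"
    and \<delta>: "\<And>s a. a \<in> Acts s - {bstar s} \<Longrightarrow> \<delta> \<le> reduced_cost r s a"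
  shows "\<delta> * off_mass \<pi> \<le> rho P bstar r - lp_obj Acts r \<pi>"
proof -
  have "\<delta> * off_mass \<pi> = (\<Sum>s\<in>UNIV. \<Sum>a\<in>Acts s - {bstar s}. \<pi> s a * \<delta>)"
    by (simp add: off_mass_def sum_distrib_left mult.commute)
  also have "\<dots> \<le> (\<Sum>s\<in>UNIV. \<Sum>a\<in>Acts s - {bstar s}. \<pi> s a * reduced_cost r s a)"
    by (intro sum_mono mult_left_mono \<delta>) (use lp_feasible_nonneg[OF F] in auto)
  finally show ?thesis by (simp add: lp_feasible_reduced_cost_off[OF F])
qed

definition state_ind :: "'s \<Rightarrow> 's \<Rightarrow> 'a \<Rightarrow> real" where
  "state_ind s0 s a = (if s = s0 then 1 else 0)"

lemma rho_state_ind: "rho P bstar (state_ind s0) = pol_stat bstar s0"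
  by (simp add: rho_def state_ind_def if_distrib cong: if_cong)

lemma lp_obj_state_ind: "lp_obj Acts (state_ind s0) \<pi> = (\<Sum>a\<in>Acts s0. \<pi> s0 a)"
proof -
  have "lp_obj Acts (state_ind s0) \<pi> = (\<Sum>s\<in>UNIV. if s = s0 then (\<Sum>a\<in>Acts s. \<pi> s a) else 0)"
    unfolding lp_obj_def by (rule sum.cong) (auto simp: state_ind_def)
  then show ?thesis by simp
qed

text \<open>If little mass sits on suboptimal actions, every state keeps nearly its stationary mass
  under \<open>bstar\<close>, almost all of it on \<open>bstar s\<close>; so \<open>bstar s\<close> is the only maximizer.\<close>
lemma argmax_eq_bstar:
  assumes F: "lp_feasible Acts P \<pi>"
    and \<beta>: "\<And>s. \<beta> s \<in> Acts s" "\<And>s a. a \<in> Acts s \<Longrightarrow> \<pi> s a \<le> \<pi> s (\<beta> s)"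
    and K: "\<And>s0 s a. a \<in> Acts s - {bstar s} \<Longrightarrow> \<bar>reduced_cost (state_ind s0) s a\<bar> \<le> K"
    and small: "\<And>s. (K + 2) * off_mass \<pi> < pol_stat bstar s"
  shows "\<beta> = bstar"
proof (rule ccontr)
  assume "\<beta> \<noteq> bstar"
  then obtain s0 where ne: "\<beta> s0 \<noteq> bstar s0" by blast
  note nn = lp_feasible_nonneg[OF F]
  define off0 where "off0 = (\<Sum>a\<in>Acts s0 - {bstar s0}. \<pi> s0 a)"
  have "off0 \<le> off_mass \<pi>"
    unfolding off0_def off_mass_def by (rule member_le_sum) (auto intro!: sum_nonneg nn)
  moreover have "\<pi> s0 (\<beta> s0) \<le> off0"
    unfolding off0_def by (rule member_le_sum) (use \<beta>(1) ne nn in auto)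
  moreover have "pol_stat bstar s0 - K * off_mass \<pi> \<le> \<pi> s0 (bstar s0) + off0"
    using lp_gap_abs_le_off_mass[OF F K, of s0]
    by (simp add: rho_state_ind lp_obj_state_ind sum_Acts_split off0_def)
  moreover have "\<pi> s0 (bstar s0) \<le> \<pi> s0 (\<beta> s0)" by (rule \<beta>(2)[OF bstar_in_Acts])
  ultimately show False using small[of s0] by (simp add: algebra_simps)
qed

lemma lp_optimal_obj_ge:
  assumes opt: "lp_optimal Acts P \<Theta> \<pi>" and close: "\<forall>s. \<forall>a\<in>Acts s. \<bar>\<Theta> s a - \<mu> s a\<bar> \<le> \<epsilon>"
  shows "rho P bstar \<mu> - 2 * \<epsilon> \<le> lp_obj Acts \<mu> \<pi>"
proof -
  have F: "lp_feasible Acts P \<pi>" using opt unfolding lp_optimal_def by blast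
  note Fs = occupation_feasible[OF bstar_adm]
  have "lp_obj Acts \<Theta> (occupation bstar) \<le> lp_obj Acts \<Theta> \<pi>"
    using opt Fs unfolding lp_optimal_def by blast
  then show ?thesis
    using lp_obj_perturb[OF F close] lp_obj_perturb[OF Fs close] lp_obj_occupation[OF bstar_adm, of \<mu>]
    by linarith
qed

text \<open>With \<open>\<delta>\<close> a lower bound on the reduced costs of suboptimal actions, \<open>K\<close> a bound on those of
  the state indicators and \<open>p\<close> a lower bound on the stationary distribution of \<open>bstar\<close>,
  an \<open>\<epsilon>\<close> with \<open>2\<epsilon>(K + 2) < p\<delta>\<close> keeps the off-policy mass below the threshold of
  \<open>argmax_eq_bstar\<close>.\<close>
lemma lpsm_choice_stable:
  assumes gap: "\<And>\<beta>. admissible Acts \<beta> \<Longrightarrow> \<beta> \<noteq> bstar \<Longrightarrow> rho P \<beta> \<mu> < rho P bstar \<mu>"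
  shows "\<exists>\<epsilon>>0. \<forall>\<Theta> \<beta>. (\<forall>s. \<forall>a\<in>Acts s. \<bar>\<Theta> s a - \<mu> s a\<bar> \<le> \<epsilon>) \<longrightarrow>
            lpsm_choice Acts P \<Theta> \<beta> \<longrightarrow> \<beta> = bstar"
proof -
  obtain \<delta> where \<delta>: "\<delta> > 0" "\<And>s a. a \<in> Acts s - {bstar s} \<Longrightarrow> \<delta> \<le> reduced_cost \<mu> s a"
    using finite_pos_lower_bound[of "{(s,a). a \<in> Acts s - {bstar s}}" "\<lambda>(s,a). reduced_cost \<mu> s a"]
      reduced_cost_pos[OF gap] by auto
  define K where "K = Max (range (\<lambda>(s0,s,a). \<bar>reduced_cost (state_ind s0) s a\<bar>))"
  have K: "\<bar>reduced_cost (state_ind s0) s a\<bar> \<le> K" for s0 s a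
    unfolding K_def by (rule Max_ge) (auto intro: rev_image_eqI[of "(s0, s, a)"])
  then have K0: "K \<ge> 0" by (meson abs_ge_zero order_trans)
  obtain p where p: "p > 0" "\<And>s. p \<le> pol_stat bstar s"
    using finite_pos_lower_bound[of UNIV "pol_stat bstar"] pol_stat_pos[OF bstar_adm] by auto
  define \<epsilon> where "\<epsilon> = p * \<delta> / (4 * (K + 2))"
  have "\<beta> = bstar" if close: "\<forall>s. \<forall>a\<in>Acts s. \<bar>\<Theta> s a - \<mu> s a\<bar> \<le> \<epsilon>"
    and choice: "lpsm_choice Acts P \<Theta> \<beta>" for \<Theta> \<beta>
  proof -
    obtain \<pi> where opt: "lp_optimal Acts P \<Theta> \<pi>"
      and \<beta>: "\<And>s. \<beta> s \<in> Acts s" "\<And>s a. a \<in> Acts s \<Longrightarrow> \<pi> s a \<le> \<pi> s (\<beta> s)"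
      using choice unfolding lpsm_choice_def by blast
    have F: "lp_feasible Acts P \<pi>" using opt unfolding lp_optimal_def by blast
    have "\<delta> * off_mass \<pi> \<le> 2 * \<epsilon>"
      using off_mass_le_lp_gap[OF F \<delta>(2)] lp_optimal_obj_ge[OF opt close] by linarith
    also have "\<dots> = \<delta> * (p / (2 * (K + 2)))"
      using K0 by (simp add: \<epsilon>_def field_simps)
    finally have "off_mass \<pi> \<le> p / (2 * (K + 2))"
      using \<delta>(1) by (simp only: mult_le_cancel_left_pos)
    then have small: "(K + 2) * off_mass \<pi> \<le> p / 2"
      using K0 by (simp add: field_simps)
    show ?thesis
    proof (rule argmax_eq_bstar[OF F \<beta> K])
      show "(K + 2) * off_mass \<pi> < pol_stat bstar s" for s using small p(1) p(2)[of s] by linarith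
    qed
  qed
  moreover have "\<epsilon> > 0" unfolding \<epsilon>_def using p \<delta> K0 by simp
  ultimately show ?thesis by blast
qed

end

section \<open>Exponential concentration and integrability of the stabilisation time\<close>

lemma (in prob_space) empirical_mean_deviation_exp_bound:
  fixes X :: "nat \<Rightarrow> 'a \<Rightarrow> 'x" and g :: "'x \<Rightarrow> real"
  assumes X_meas: "\<And>t. X t \<in> measurable M N"
    and X_indep: "indep_vars (\<lambda>_. N) X UNIV"
    and X_ident: "\<And>t. distr M N (X t) = distr M N (X 0)"
    and g_meas: "g \<in> borel_measurable N"
    and g_bdd: "bdd_above (g ` space N)" "bdd_below (g ` space N)"
    and \<epsilon>: "\<epsilon> > 0"
  shows "\<exists>c>0. \<forall>n\<ge>1. prob {\<omega>\<in>space M.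
           \<epsilon> \<le> \<bar>(\<Sum>k<n. g (X k \<omega>)) / real n - expectation (\<lambda>\<omega>. g (X 0 \<omega>))\<bar>}
         \<le> 2 * exp (- c * real n)"
proof -
  note [measurable] = X_meas g_meas
  define a where "a = Inf (g ` space N)"
  define b where "b = a + \<bar>Sup (g ` space N) - a\<bar> + 1"
  have ab: "a < b" unfolding b_def by simp
  have range: "g x \<in> {a..b}" if x: "x \<in> space N" for x
  proof -
    have "a \<le> g x" unfolding a_def by (rule cInf_lower) (use x g_bdd in auto)
    moreover have "g x \<le> Sup (g ` space N)" by (rule cSup_upper) (use x g_bdd in auto)
    ultimately show ?thesis unfolding b_def by auto
  qed
  define c where "c = 2 * \<epsilon>\<^sup>2 / (b - a)\<^sup>2"
  have "prob {\<omega>\<in>space M. \<epsilon> \<le> \<bar>(\<Sum>k<n. g (X k \<omega>)) / real n - expectation (\<lambda>\<omega>. g (X 0 \<omega>))\<bar>}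
        \<le> 2 * exp (- c * real n)" if n: "n \<ge> 1" for n
  proof -
    interpret Hoeffding_ineq_iid M "{..<n}" "\<lambda>k \<omega>. g (X k \<omega>)" "\<lambda>\<omega>. g (X 0 \<omega>)" a b
      "expectation (\<lambda>\<omega>. g (X 0 \<omega>))"
    proof unfold_locales
      show "indep_vars (\<lambda>_. borel) (\<lambda>k \<omega>. g (X k \<omega>)) {..<n}"
        by (rule indep_vars_compose2[OF indep_vars_subset[OF X_indep]]) auto
      show "distr M borel (\<lambda>\<omega>. g (X k \<omega>)) = distr M borel (\<lambda>\<omega>. g (X 0 \<omega>))" for k
        using distr_distr[OF g_meas X_meas[of k]] distr_distr[OF g_meas X_meas[of 0]] X_ident[of k]
        by (simp add: comp_def)
      show "AE \<omega> in M. g (X 0 \<omega>) \<in> {a..b}"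
        using range measurable_space[OF X_meas] by (intro AE_I2) blast
    qed auto
    have "prob {\<omega>\<in>space M. \<bar>(\<Sum>k<n. g (X k \<omega>)) / real (card {..<n}) - expectation (\<lambda>\<omega>. g (X 0 \<omega>))\<bar> \<ge> \<epsilon>}
        \<le> 2 * exp (- 2 * real (card {..<n}) * \<epsilon>\<^sup>2 / (b - a)\<^sup>2)"
      by (rule Hoeffding_ineq_abs_ge') (use \<epsilon> ab n in \<open>auto simp: lessThan_empty_iff\<close>)
    then show ?thesis by (simp add: c_def mult.commute mult.left_commute)
  qed
  moreover have "c > 0" unfolding c_def using \<epsilon> ab by simp
  ultimately show ?thesis by blast
qed

lemma finite_uniform_exp_bound:
  fixes u :: "'i \<Rightarrow> nat \<Rightarrow> real"
  assumes "finite I" "C \<ge> 0"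
    and "\<And>i. i \<in> I \<Longrightarrow> \<exists>c>0. \<forall>n\<ge>1. u i n \<le> C * exp (- c * real n)"
  shows "\<exists>c>0. \<forall>i\<in>I. \<forall>n\<ge>1. u i n \<le> C * exp (- c * real n)"
proof -
  obtain c where c: "\<And>i. i \<in> I \<Longrightarrow> c i > 0 \<and> (\<forall>n\<ge>1. u i n \<le> C * exp (- c i * real n))"
    using assms(3) by metis
  obtain c0 where c0: "c0 > 0" "\<forall>i\<in>I. c0 \<le> c i"
    using finite_pos_lower_bound[OF assms(1), of c] c by blast
  have "u i n \<le> C * exp (- c0 * real n)" if "i \<in> I" "n \<ge> 1" for i n
  proof -
    have "u i n \<le> C * exp (- c i * real n)" using c that by blast
    also have "\<dots> \<le> C * exp (- c0 * real n)"
      using c0 that assms(2) by (intro mult_left_mono) (auto intro: mult_right_mono)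
    finally show ?thesis .
  qed
  then show ?thesis using c0(1) by blast
qed

lemma summable_real_mult_exp:
  fixes c :: real assumes c: "c > 0"
  shows "summable (\<lambda>n. real n * exp (- c * real n))"
proof (rule summable_comparison_test'[where N=0])
  show "summable (\<lambda>n. (2 / c) * exp (- c / 2) ^ n)"
    by (rule summable_mult, rule summable_geometric) (use c in simp)
  fix n :: nat
  have "real n \<le> (2 / c) * exp (c * real n / 2)"
    using exp_ge_add_one_self[of "c * real n / 2"] c by (simp add: field_simps)
  then have "real n * exp (- c * real n) \<le> (2 / c) * exp (c * real n / 2) * exp (- c * real n)"
    by (rule mult_right_mono) simp
  also have "\<dots> = (2 / c) * exp (- c / 2) ^ n"
    by (simp add: mult.assoc exp_add[symmetric] exp_of_nat_mult[symmetric] field_simps)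
  finally show "norm (real n * exp (- c * real n)) \<le> (2 / c) * exp (- c / 2) ^ n" by simp
qed

text \<open>If all \<open>g n\<close> are at least \<open>1\<close> at the failures \<open>n \<ge> 1\<close>, then the last failure \<open>n\<close> (or
  infinitely many of them) is dominated by the series; \<open>first_stable\<close> is at most one more.\<close>
lemma first_stable_le_suminf:
  fixes g :: "nat \<Rightarrow> ennreal"
  assumes bad: "\<And>n. n \<ge> 1 \<Longrightarrow> bs n \<noteq> b \<Longrightarrow> g n \<ge> 1"
  shows "first_stable bs b \<le> 1 + (\<Sum>m. of_nat (Suc m) * g (Suc m))"
proof -
  let ?S = "\<Sum>m. of_nat (Suc m) * g (Suc m)"
  have fail_le: "of_nat n \<le> ?S" if n: "n \<ge> 1" "bs n \<noteq> b" for n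
  proof -
    obtain m where m: "n = Suc m" using n(1) by (cases n) auto
    have "of_nat n \<le> of_nat (Suc m) * g (Suc m)"
      using bad[OF n] m by (metis mult.right_neutral mult_left_mono zero_le)
    also have "\<dots> \<le> ?S"
      using sum_le_suminf[OF summableI, of "{m}" "\<lambda>m. of_nat (Suc m) * g (Suc m)"] by simp
    finally show ?thesis .
  qed
  define BAD where "BAD = {n. n \<ge> 1 \<and> bs n \<noteq> b}"
  show ?thesis
  proof (cases "finite BAD")
    case True
    define N where "N = Max (insert 0 BAD)"
    have "\<forall>t\<ge>Suc N. bs t = b"
      using True unfolding N_def BAD_def by (auto simp: Suc_le_eq dest: Max_ge[rotated])
    then have "first_stable bs b \<le> ennreal (real (Suc N))"
      unfolding first_stable_def by (intro INF_lower) auto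
    also have "\<dots> = 1 + of_nat N" by (simp add: ennreal_of_nat_eq_real_of_nat[symmetric])
    also have "of_nat N \<le> ?S"
    proof (cases "N = 0")
      case False
      then have "N \<in> BAD" using True Max_in[of "insert 0 BAD"] unfolding N_def by auto
      then show ?thesis using fail_le unfolding BAD_def by blast
    qed simp
    finally show ?thesis by (simp add: add_left_mono)
  next
    case False
    have "of_nat k \<le> ?S" for k
    proof -
      obtain n where n: "n \<in> BAD" "k < n" using False by (meson infinite_nat_iff_unbounded)
      then show ?thesis using fail_le[of n] unfolding BAD_def by (auto intro: order_trans[rotated])
    qed
    then have "?S = \<top>"
      using ennreal_SUP_of_nat_eq_top by (metis SUP_least top_unique)
    then show ?thesis by simp
  qed
qed

lemma (in prob_space) nn_integral_first_stable_finite: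
  fixes bs :: "nat \<Rightarrow> 'a \<Rightarrow> 's \<Rightarrow> 'b" and A :: "nat \<Rightarrow> 'i \<Rightarrow> 'a set"
  assumes I: "finite I" and c: "c > 0" and C: "C \<ge> 0"
    and A_sets: "\<And>n i. i \<in> I \<Longrightarrow> A n i \<in> sets M"
    and A_prob: "\<And>n i. n \<ge> 1 \<Longrightarrow> i \<in> I \<Longrightarrow> prob (A n i) \<le> C * exp (- c * real n)"
    and bad: "\<And>n \<omega>. n \<ge> 1 \<Longrightarrow> \<omega> \<in> space M \<Longrightarrow> bs n \<omega> \<noteq> b \<Longrightarrow> \<exists>i\<in>I. \<omega> \<in> A n i"
  shows "(\<integral>\<^sup>+ \<omega>. first_stable (\<lambda>t. bs t \<omega>) b \<partial>M) < \<infinity>"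
proof -
  define g where "g n \<omega> = (\<Sum>i\<in>I. indicator (A n i) \<omega> :: ennreal)" for n \<omega>
  have g_meas [measurable]: "g n \<in> borel_measurable M" for n
    unfolding g_def by (intro borel_measurable_sum borel_measurable_indicator A_sets)
  define D where "D = real (card I) * C"
  have g_int: "(\<integral>\<^sup>+ \<omega>. g n \<omega> \<partial>M) \<le> ennreal (D * exp (- c * real n))" if n: "n \<ge> 1" for n
  proof -
    have "(\<integral>\<^sup>+ \<omega>. g n \<omega> \<partial>M) = (\<Sum>i\<in>I. emeasure M (A n i))"
      unfolding g_def using A_sets by (simp add: nn_integral_sum nn_integral_indicator)
    also have "\<dots> \<le> (\<Sum>i\<in>I. ennreal (C * exp (- c * real n)))"
      using A_prob[OF n] by (intro sum_mono) (simp add: emeasure_eq_measure ennreal_leI)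
    also have "\<dots> = ennreal (D * exp (- c * real n))"
      using C by (simp add: D_def ennreal_of_nat_eq_real_of_nat ennreal_mult mult.assoc)
    finally show ?thesis .
  qed
  have "summable (\<lambda>m. real (Suc m) * exp (- c * real (Suc m)))"
    using summable_real_mult_exp[OF c] by (subst summable_Suc_iff)
  then have summable: "summable (\<lambda>m. real (Suc m) * (D * exp (- c * real (Suc m))))"
    using summable_mult[of _ D] by (simp add: mult.left_commute)
  have "(\<integral>\<^sup>+ \<omega>. first_stable (\<lambda>t. bs t \<omega>) b \<partial>M)
      \<le> (\<integral>\<^sup>+ \<omega>. 1 + (\<Sum>m. of_nat (Suc m) * g (Suc m) \<omega>) \<partial>M)"
  proof (intro nn_integral_mono first_stable_le_suminf)
    fix n \<omega> assume "\<omega> \<in> space M" "n \<ge> 1" "bs n \<omega> \<noteq> b"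
    then obtain i where "i \<in> I" "\<omega> \<in> A n i" using bad by blast
    then show "1 \<le> g n \<omega>"
      unfolding g_def using member_le_sum[OF _ _ I, of i "\<lambda>i. indicator (A n i) \<omega> :: ennreal"] by simp
  qed
  also have "\<dots> = 1 + (\<Sum>m. of_nat (Suc m) * (\<integral>\<^sup>+ \<omega>. g (Suc m) \<omega> \<partial>M))"
    by (simp add: nn_integral_add nn_integral_suminf nn_integral_cmult emeasure_space_1)
  also have "\<dots> \<le> 1 + (\<Sum>m. ennreal (real (Suc m) * (D * exp (- c * real (Suc m)))))"
  proof (intro add_left_mono suminf_le)
    fix m
    have "of_nat (Suc m) * (\<integral>\<^sup>+ \<omega>. g (Suc m) \<omega> \<partial>M)
        \<le> of_nat (Suc m) * ennreal (D * exp (- c * real (Suc m)))"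
      by (rule mult_left_mono[OF g_int]) auto
    then show "of_nat (Suc m) * (\<integral>\<^sup>+ \<omega>. g (Suc m) \<omega> \<partial>M)
        \<le> ennreal (real (Suc m) * (D * exp (- c * real (Suc m))))"
      by (simp add: ennreal_of_nat_eq_real_of_nat[symmetric] ennreal_mult')
  qed auto
  also have "\<dots> = 1 + ennreal (\<Sum>m. real (Suc m) * (D * exp (- c * real (Suc m))))"
    using C by (subst suminf_ennreal2[OF _ summable]) (auto simp: D_def)
  also have "\<dots> < \<infinity>" by (simp add: ennreal_add_less_top)
  finally show ?thesis .
qed

lemma emp_mean_eq: "emp_mean f xs n s a = (\<Sum>k<n. f s a (xs k)) / real n"
  by (simp add: emp_mean_def)

theorem theorem3:
  fixes Acts :: "'s::finite \<Rightarrow> 'a::finite set"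
    and P :: "'s \<Rightarrow> 'a \<Rightarrow> 's \<Rightarrow> real"
    and M :: "'w measure" and N :: "'x measure"
    and X :: "nat \<Rightarrow> 'w \<Rightarrow> 'x"
    and f :: "'s \<Rightarrow> 'a \<Rightarrow> 'x \<Rightarrow> real"
    and bstar :: "'s \<Rightarrow> 'a"
    and beta :: "nat \<Rightarrow> 'w \<Rightarrow> 's \<Rightarrow> 'a"
  assumes acts_ne: "\<And>s. Acts s \<noteq> {}"
    and P_nonneg: "\<And>s a s'. a \<in> Acts s \<Longrightarrow> P s a s' \<ge> 0"
    and P_sum: "\<And>s a. a \<in> Acts s \<Longrightarrow> (\<Sum>s'\<in>UNIV. P s a s') = 1"
    and ergodic: "\<And>\<beta>. admissible Acts \<beta> \<Longrightarrow>
        irreducible_chain (pol_mat P \<beta>) \<and> aperiodic_chain (pol_mat P \<beta>)"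
    and prob: "prob_space M"
    and X_meas: "\<And>t. X t \<in> measurable M N"
    and X_indep: "prob_space.indep_vars M (\<lambda>_. N) X UNIV"
    and X_ident: "\<And>t. distr M N (X t) = distr M N (X 0)"
    and f_meas: "\<And>s a. a \<in> Acts s \<Longrightarrow> f s a \<in> borel_measurable N"
    and f_bdd: "\<And>s a. a \<in> Acts s \<Longrightarrow>
        bdd_above (f s a ` space N) \<and> bdd_below (f s a ` space N)"
    and bstar_adm: "admissible Acts bstar"
    and bstar_opt: "\<And>\<beta>. admissible Acts \<beta> \<Longrightarrow>
        rho P \<beta> (\<lambda>s a. prob_space.expectation M (\<lambda>\<omega>. f s a (X 0 \<omega>)))
        \<le> rho P bstar (\<lambda>s a. prob_space.expectation M (\<lambda>\<omega>. f s a (X 0 \<omega>)))"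
    and gap: "\<And>\<beta>. admissible Acts \<beta> \<Longrightarrow> \<beta> \<noteq> bstar \<Longrightarrow>
        rho P \<beta> (\<lambda>s a. prob_space.expectation M (\<lambda>\<omega>. f s a (X 0 \<omega>)))
        < rho P bstar (\<lambda>s a. prob_space.expectation M (\<lambda>\<omega>. f s a (X 0 \<omega>)))"
    and lpsm: "\<And>n \<omega>. n \<ge> 1 \<Longrightarrow> \<omega> \<in> space M \<Longrightarrow>
        lpsm_choice Acts P (emp_mean f (\<lambda>k. X k \<omega>) n) (beta n \<omega>)"
  shows "(\<integral>\<^sup>+ \<omega>. first_stable (\<lambda>t. beta t \<omega>) bstar \<partial>M) < \<infinity>"
proof -
  interpret prob_space M by (rule prob)
  interpret irreducible_mdp Acts P bstar
    by unfold_locales (use P_nonneg P_sum ergodic bstar_adm in auto)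
  define \<mu> where "\<mu> s a = expectation (\<lambda>\<omega>. f s a (X 0 \<omega>))" for s a
  obtain \<epsilon> where \<epsilon>: "\<epsilon> > 0" and stable: "\<And>\<Theta> \<beta>. \<forall>s. \<forall>a\<in>Acts s. \<bar>\<Theta> s a - \<mu> s a\<bar> \<le> \<epsilon> \<Longrightarrow>
      lpsm_choice Acts P \<Theta> \<beta> \<Longrightarrow> \<beta> = bstar"
    using lpsm_choice_stable[of \<mu>] gap unfolding \<mu>_def by blast
  define SA where "SA = {(s, a). a \<in> Acts s}"
  define dev where "dev n = (\<lambda>(s, a). {\<omega>\<in>space M. \<epsilon> \<le> \<bar>emp_mean f (\<lambda>k. X k \<omega>) n s a - \<mu> s a\<bar>})"
    for n
  obtain c where c: "c > 0" "\<And>p n. p \<in> SA \<Longrightarrow> n \<ge> 1 \<Longrightarrow> prob (dev n p) \<le> 2 * exp (- c * real n)"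
    using finite_uniform_exp_bound[of SA 2 "\<lambda>p n. prob (dev n p)"]
      empirical_mean_deviation_exp_bound[OF X_meas X_indep X_ident f_meas f_bdd[THEN conjunct1]
        f_bdd[THEN conjunct2] \<epsilon>]
    unfolding SA_def dev_def emp_mean_eq \<mu>_def by fastforce
  show ?thesis
  proof (rule nn_integral_first_stable_finite[of SA c 2 dev])
    show "dev n p \<in> sets M" if "p \<in> SA" for n p
      using that f_meas X_meas unfolding SA_def dev_def by (auto simp: emp_mean_eq) measurable
    show "\<exists>p\<in>SA. \<omega> \<in> dev n p" if "n \<ge> 1" "\<omega> \<in> space M" "beta n \<omega> \<noteq> bstar" for n \<omega>
      using stable[OF _ lpsm[OF that(1,2)]] that(2,3)
      unfolding SA_def dev_def by (force simp: not_le less_imp_le)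
  qed (use c in auto)
qed


end
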